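(* Let $E$ be a finite set and $\tau:2^E\to 2^E$. If $(E,\tau)$ is a violator space, then for every $X\subseteq E$, $ex(X)=\bigcap\{B\subseteq X:\tau(B)=\tau(X)\}$. If $(E,\tau)$ is a convex space, then for every $X\subseteq E$, $ex(X)\subseteq\bigcap\{B\subseteq X:\tau(B)=\tau(X)\}$.
   Context: $(E,\tau)$ is a violator space if (C1) $Y\subseteq\tau(Y)$ for all $Y$, and (C22) $F\subseteq G\subseteq\tau(F)$ implies $\tau(G)=\tau(F)$. $(E,\tau)$ is a convex space if (C1) holds and (convexity) for all $Y_1\subseteq Y_2\subseteq Y_3\subseteq E$ with $\tau(Y_1)=\tau(Y_3)$ we have $\tau(Y_2)=\tau(Y_1)$. An element $x\in X$ is an extreme point of $X$ if $x\notin\tau(X-\{x\})$; $ex(X)$ is the set of extreme points of $X$. *)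

theory Defs
  imports Main
begin

definition violator_space :: "'a set \<Rightarrow> ('a set \<Rightarrow> 'a set) \<Rightarrow> bool" where
  "violator_space E \<tau> \<longleftrightarrow>
     (\<forall>Y. Y \<subseteq> E \<longrightarrow> \<tau> Y \<subseteq> E) \<and>
     (\<forall>Y. Y \<subseteq> E \<longrightarrow> Y \<subseteq> \<tau> Y) \<and>
     (\<forall>F G. F \<subseteq> G \<and> G \<subseteq> \<tau> F \<and> G \<subseteq> E \<longrightarrow> \<tau> G = \<tau> F)"

definition convex_space :: "'a set \<Rightarrow> ('a set \<Rightarrow> 'a set) \<Rightarrow> bool" where
  "convex_space E \<tau> \<longleftrightarrow>
     (\<forall>Y. Y \<subseteq> E \<longrightarrow> \<tau> Y \<subseteq> E) \<and>
     (\<forall>Y. Y \<subseteq> E \<longrightarrow> Y \<subseteq> \<tau> Y) \<and>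
     (\<forall>Y1 Y2 Y3. Y1 \<subseteq> Y2 \<and> Y2 \<subseteq> Y3 \<and> Y3 \<subseteq> E \<and> \<tau> Y1 = \<tau> Y3 \<longrightarrow> \<tau> Y2 = \<tau> Y1)"

definition ex :: "('a set \<Rightarrow> 'a set) \<Rightarrow> 'a set \<Rightarrow> 'a set" where
  "ex \<tau> X = {x \<in> X. x \<notin> \<tau> (X - {x})}"

end

theory Submission
  imports Defs
begin

text \<open>An extreme point x of X cannot be dropped without changing \<open>\<tau> X\<close>, because
  \<open>x \<in> X \<subseteq> \<tau> X\<close> but \<open>x \<notin> \<tau> (X - {x})\<close>. In both kinds of space, any B \<subseteq> X with
  \<open>\<tau> B = \<tau> X\<close> that misses x would force \<open>\<tau> (X - {x}) = \<tau> X\<close>; hence every extreme point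
  lies in every such B. Conversely, in a violator space a non-extreme point x satisfies
  \<open>X \<subseteq> \<tau> (X - {x})\<close>, so \<open>X - {x}\<close> is itself such a B and x is not in the intersection.\<close>

lemma violator_space_extensive:
  "violator_space E \<tau> \<Longrightarrow> Y \<subseteq> E \<Longrightarrow> Y \<subseteq> \<tau> Y"
  unfolding violator_space_def by blast

lemma violator_space_stable:
  assumes "violator_space E \<tau>" "F \<subseteq> G" "G \<subseteq> \<tau> F" "G \<subseteq> E"
  shows "\<tau> G = \<tau> F"
  using assms unfolding violator_space_def by simp

lemma convex_space_extensive:
  "convex_space E \<tau> \<Longrightarrow> Y \<subseteq> E \<Longrightarrow> Y \<subseteq> \<tau> Y"
  unfolding convex_space_def by blast

lemma convex_space_convex:
  assumes "convex_space E \<tau>" "Y1 \<subseteq> Y2" "Y2 \<subseteq> Y3" "Y3 \<subseteq> E" "\<tau> Y1 = \<tau> Y3"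
  shows "\<tau> Y2 = \<tau> Y1"
  using assms unfolding convex_space_def by (metis (no_types))

lemma ex_remove_changes_closure:
  assumes "X \<subseteq> \<tau> X" and "x \<in> ex \<tau> X"
  shows "\<tau> (X - {x}) \<noteq> \<tau> X"
  using assms unfolding ex_def by blast

lemma ex_subset_Inter_same_closure:
  assumes extensive: "X \<subseteq> \<tau> X"
    and removal: "\<And>x B. B \<subseteq> X - {x} \<Longrightarrow> \<tau> B = \<tau> X \<Longrightarrow> \<tau> (X - {x}) = \<tau> X"
  shows "ex \<tau> X \<subseteq> \<Inter>{B. B \<subseteq> X \<and> \<tau> B = \<tau> X}"
proof (intro subsetI InterI)
  fix x B
  assume x: "x \<in> ex \<tau> X" and "B \<in> {B. B \<subseteq> X \<and> \<tau> B = \<tau> X}"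
  then have B: "B \<subseteq> X" "\<tau> B = \<tau> X" by auto
  show "x \<in> B"
  proof (rule ccontr)
    assume "x \<notin> B"
    with B(1) have "B \<subseteq> X - {x}" by blast
    from removal[OF this B(2)] ex_remove_changes_closure[OF extensive x]
    show False by contradiction
  qed
qed

lemma violator_space_remove_same_closure:
  assumes V: "violator_space E \<tau>" and "X \<subseteq> E"
    and B: "B \<subseteq> X - {x}" "\<tau> B = \<tau> X"
  shows "\<tau> (X - {x}) = \<tau> X"
proof -
  have "X - {x} \<subseteq> \<tau> B"
    using violator_space_extensive[OF V \<open>X \<subseteq> E\<close>] B(2) by blast
  moreover have "X - {x} \<subseteq> E" using \<open>X \<subseteq> E\<close> by blast
  ultimately have "\<tau> (X - {x}) = \<tau> B"
    by (rule violator_space_stable[OF V B(1)])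
  with B(2) show ?thesis by simp
qed

lemma convex_space_remove_same_closure:
  assumes V: "convex_space E \<tau>" and "X \<subseteq> E"
    and B: "B \<subseteq> X - {x}" "\<tau> B = \<tau> X"
  shows "\<tau> (X - {x}) = \<tau> X"
  using convex_space_convex[OF V B(1) Diff_subset \<open>X \<subseteq> E\<close> B(2)] B(2) by simp

lemma violator_space_Inter_same_closure_subset_ex:
  assumes V: "violator_space E \<tau>" and "X \<subseteq> E"
  shows "\<Inter>{B. B \<subseteq> X \<and> \<tau> B = \<tau> X} \<subseteq> ex \<tau> X"
proof
  fix x assume x: "x \<in> \<Inter>{B. B \<subseteq> X \<and> \<tau> B = \<tau> X}"
  then have "x \<in> X" by blast
  show "x \<in> ex \<tau> X"
  proof (rule ccontr)
    assume "x \<notin> ex \<tau> X"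
    with \<open>x \<in> X\<close> have "x \<in> \<tau> (X - {x})" by (simp add: ex_def)
    moreover have "X - {x} \<subseteq> \<tau> (X - {x})"
      by (rule violator_space_extensive[OF V]) (use \<open>X \<subseteq> E\<close> in blast)
    ultimately have "X \<subseteq> \<tau> (X - {x})" by blast
    then have "\<tau> X = \<tau> (X - {x})"
      by (rule violator_space_stable[OF V Diff_subset _ \<open>X \<subseteq> E\<close>])
    then have "X - {x} \<in> {B. B \<subseteq> X \<and> \<tau> B = \<tau> X}" by auto
    with x show False by blast
  qed
qed

theorem mainTheorem13:
  fixes E :: "'a set" and \<tau> :: "'a set \<Rightarrow> 'a set"
  assumes "finite E"
  shows "(violator_space E \<tau> \<longrightarrow>
            (\<forall>X. X \<subseteq> E \<longrightarrow> ex \<tau> X = \<Inter>{B. B \<subseteq> X \<and> \<tau> B = \<tau> X}))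
       \<and> (convex_space E \<tau> \<longrightarrow>
            (\<forall>X. X \<subseteq> E \<longrightarrow> ex \<tau> X \<subseteq> \<Inter>{B. B \<subseteq> X \<and> \<tau> B = \<tau> X}))"
proof (intro conjI impI allI)
  fix X assume V: "violator_space E \<tau>" and "X \<subseteq> E"
  show "ex \<tau> X = \<Inter>{B. B \<subseteq> X \<and> \<tau> B = \<tau> X}"
  proof
    show "ex \<tau> X \<subseteq> \<Inter>{B. B \<subseteq> X \<and> \<tau> B = \<tau> X}"
      using violator_space_extensive[OF V \<open>X \<subseteq> E\<close>]
        violator_space_remove_same_closure[OF V \<open>X \<subseteq> E\<close>]
      by (rule ex_subset_Inter_same_closure)
    show "\<Inter>{B. B \<subseteq> X \<and> \<tau> B = \<tau> X} \<subseteq> ex \<tau> X"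
      using V \<open>X \<subseteq> E\<close> by (rule violator_space_Inter_same_closure_subset_ex)
  qed
next
  fix X assume C: "convex_space E \<tau>" and "X \<subseteq> E"
  show "ex \<tau> X \<subseteq> \<Inter>{B. B \<subseteq> X \<and> \<tau> B = \<tau> X}"
    using convex_space_extensive[OF C \<open>X \<subseteq> E\<close>]
      convex_space_remove_same_closure[OF C \<open>X \<subseteq> E\<close>]
    by (rule ex_subset_Inter_same_closure)
qed

end
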